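(* Let $a\le b$ be integers and $i\in[a,b]$. Then in $\mathcal{K}$ $$[b-a+2]_q\,u_i\,u_{[a,b]}=q^{\,i-a+1}[b-i+1]_q\,u_{[a-1,b]}+[i-a+1]_q\,u_{[a,b+1]}.$$ Moreover, this identity is a consequence of the defining relations $(q+1)u_j^2=qu_ju_{j-1}+u_ju_{j+1}$ for $j=a,a+1,\dots,b$ only.
   Context: Let $\mathbf{k}$ be a field of characteristic zero and $q\in\mathbf{k}$ an element that is not a nontrivial root of unity (so $[m]_q\ne 0$ for $m\ge 1$). Notation: $[m]_q=1+q+\dots+q^{m-1}$, $[m]_q!=\prod_{i=1}^m[i]_q$, $\binom{m}{k}_q=[m]_q!/([k]_q![m-k]_q!)$, and $[a,b]=\{a,a+1,\dots,b\}$. The Klyachko algebra $\mathcal{K}$ is the commutative $\mathbf{k}$-algebra generated by $u_i$, $i\in\mathbb{Z}$, subject to the relations $(q+1)u_i^2=qu_iu_{i-1}+u_iu_{i+1}$ for all $i\in\mathbb{Z}$. For a finite set $I\subset\mathbb{Z}$, $u_I=\prod_{i\in I}u_i$. *)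

theory Defs
  imports Main
begin

definition qint :: "'a::comm_semiring_1 \<Rightarrow> nat \<Rightarrow> 'a" where
  "qint q m = (\<Sum>j<m. q ^ j)"

definition uprod :: "(int \<Rightarrow> 'r::comm_ring_1) \<Rightarrow> int set \<Rightarrow> 'r" where
  "uprod u I = (\<Prod>i\<in>I. u i)"

text \<open>Defining relation of the Klyachko algebra at index j, with Q the image of q.\<close>
definition klyachko_rel :: "'r::comm_ring_1 \<Rightarrow> (int \<Rightarrow> 'r) \<Rightarrow> int \<Rightarrow> bool" where
  "klyachko_rel Q u j \<longleftrightarrow> (Q + 1) * (u j)^2 = Q * u j * u (j - 1) + u j * u (j + 1)"

text \<open>Unital ring homomorphism (structure map making a commutative ring a k-algebra).\<close>
definition unital_ring_hom :: "('k::comm_ring_1 \<Rightarrow> 'r::comm_ring_1) \<Rightarrow> bool" where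
  "unital_ring_hom phi \<longleftrightarrow> phi 1 = 1 \<and> (\<forall>x y. phi (x + y) = phi x + phi y) \<and>
      (\<forall>x y. phi (x * y) = phi x * phi y)"

end

theory Submission
  imports Defs
begin

text \<open>Multiplying the relations by u_[a,b], the elements x_k = u_(a-1+k) u_[a,b] satisfy the
  linear recurrence (q+1) x_k = q x_(k-1) + x_(k+1) for 1 \<le> k \<le> b-a+1, since every u_j with
  j in [a,b] divides u_[a,b]. Its solutions are x_k = x_0 + [k]_q (x_1 - x_0), and eliminating
  x_1 - x_0 between x_m and x_n gives [n]_q x_m = q^m [n-m]_q x_0 + [m]_q x_n; for n = b-a+2 and
  m = i-a+1 this is the claim. No hypothesis on q is used.\<close>

lemma qint_0 [simp]: "qint Q 0 = 0"
  by (simp add: qint_def)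

lemma qint_Suc: "qint Q (Suc k) = qint Q k + Q ^ k"
  by (simp add: qint_def)

lemma qint_add: "qint Q (m + l) = qint Q m + Q ^ m * qint Q l"
  by (induction l) (simp_all add: qint_def algebra_simps power_add)

lemma q_recurrence_diff:
  fixes x :: "nat \<Rightarrow> 'r::comm_ring_1"
  assumes rec: "\<And>k. 1 \<le> k \<Longrightarrow> k < N \<Longrightarrow> (Q + 1) * x k = Q * x (k - 1) + x (k + 1)"
    and "k < N"
  shows "x (k + 1) - x k = Q ^ k * (x 1 - x 0)"
  using \<open>k < N\<close>
proof (induction k)
  case (Suc k)
  have "(Q + 1) * x (Suc k) = Q * x k + x (Suc k + 1)"
    using rec[of "Suc k"] Suc.prems by simp
  then have "x (Suc k + 1) - x (Suc k) = Q * (x (k + 1) - x k)"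
    by (simp add: algebra_simps)
  then show ?case using Suc by simp
qed simp

lemma q_recurrence_solution:
  fixes x :: "nat \<Rightarrow> 'r::comm_ring_1"
  assumes rec: "\<And>k. 1 \<le> k \<Longrightarrow> k < N \<Longrightarrow> (Q + 1) * x k = Q * x (k - 1) + x (k + 1)"
    and "k \<le> N"
  shows "x k = x 0 + qint Q k * (x 1 - x 0)"
  using \<open>k \<le> N\<close>
proof (induction k)
  case (Suc k)
  then have "k < N" by simp
  have "x (Suc k) = x k + (x (k + 1) - x k)"
    by simp
  also have "\<dots> = x 0 + qint Q k * (x 1 - x 0) + Q ^ k * (x 1 - x 0)"
    using Suc.IH q_recurrence_diff[OF rec \<open>k < N\<close>] \<open>k < N\<close> by simp
  also have "\<dots> = x 0 + qint Q (Suc k) * (x 1 - x 0)"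
    by (simp only: qint_Suc distrib_right add.assoc)
  finally show ?case .
qed simp

lemma q_recurrence_interpolation:
  fixes x :: "nat \<Rightarrow> 'r::comm_ring_1"
  assumes rec: "\<And>k. 1 \<le> k \<Longrightarrow> k < n \<Longrightarrow> (Q + 1) * x k = Q * x (k - 1) + x (k + 1)"
    and "m \<le> n"
  shows "qint Q n * x m = Q ^ m * qint Q (n - m) * x 0 + qint Q m * x n"
proof -
  have split: "qint Q n = qint Q m + Q ^ m * qint Q (n - m)"
    using qint_add[of Q m "n - m"] \<open>m \<le> n\<close> by simp
  have xm: "x m = x 0 + qint Q m * (x 1 - x 0)"
    using q_recurrence_solution[OF rec \<open>m \<le> n\<close>] .
  have xn: "x n = x 0 + qint Q n * (x 1 - x 0)"
    using q_recurrence_solution[OF rec order_refl] .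
  show ?thesis
    unfolding xm xn split by (simp add: algebra_simps)
qed

lemma klyachko_rel_mult:
  assumes "klyachko_rel Q u j"
  shows "(Q + 1) * (u j * (u j * c)) = Q * (u (j - 1) * (u j * c)) + u (j + 1) * (u j * c)"
proof -
  have "(Q + 1) * (u j)\<^sup>2 * c = (Q * u j * u (j - 1) + u j * u (j + 1)) * c"
    using assms unfolding klyachko_rel_def by simp
  then show ?thesis
    by (simp add: power2_eq_square algebra_simps)
qed

lemma uprod_remove: "j \<in> {a..b} \<Longrightarrow> uprod u {a..b} = u j * uprod u ({a..b} - {j})"
  unfolding uprod_def by (simp add: prod.remove)

lemma uprod_extend_left: "a \<le> b \<Longrightarrow> uprod u {a - 1..b} = u (a - 1) * uprod u {a..b}"
proof -
  assume "a \<le> b"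
  then have "{a - 1..b} = insert (a - 1) {a..b}" by auto
  then show ?thesis unfolding uprod_def by simp
qed

lemma uprod_extend_right: "a \<le> b \<Longrightarrow> uprod u {a..b + 1} = u (b + 1) * uprod u {a..b}"
proof -
  assume "a \<le> b"
  then have "{a..b + 1} = insert (b + 1) {a..b}" by auto
  then show ?thesis unfolding uprod_def by simp
qed

lemma klyachko_shifted_recurrence:
  assumes rel: "\<forall>j\<in>{a..b}. klyachko_rel Q u j"
    and k: "1 \<le> k" "k < nat (b - a + 2)"
  shows "(Q + 1) * (u (a - 1 + int k) * uprod u {a..b})
       = Q * (u (a - 1 + int (k - 1)) * uprod u {a..b}) + u (a - 1 + int (k + 1)) * uprod u {a..b}"
proof -
  define j where "j = a - 1 + int k"
  have j: "j \<in> {a..b}"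
    using k unfolding j_def by auto
  have "a - 1 + int (k - 1) = j - 1" "a - 1 + int (k + 1) = j + 1"
    using k unfolding j_def by auto
  then show ?thesis
    using klyachko_rel_mult[of Q u j] rel j
    unfolding j_def[symmetric] uprod_remove[OF j] by simp
qed

lemma klyachko_identity:
  fixes u :: "int \<Rightarrow> 'r::comm_ring_1"
  assumes ab: "a \<le> b" and i: "i \<in> {a..b}"
    and rel: "\<forall>j\<in>{a..b}. klyachko_rel Q u j"
  shows "qint Q (nat (b - a + 2)) * u i * uprod u {a..b}
       = Q ^ nat (i - a + 1) * qint Q (nat (b - i + 1)) * uprod u {a - 1..b}
         + qint Q (nat (i - a + 1)) * uprod u {a..b + 1}"
proof -
  define x where "x k = u (a - 1 + int k) * uprod u {a..b}" for k
  have rec: "(Q + 1) * x k = Q * x (k - 1) + x (k + 1)" if "1 \<le> k" "k < nat (b - a + 2)" for k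
    using klyachko_shifted_recurrence[OF rel that] unfolding x_def .
  have "nat (i - a + 1) \<le> nat (b - a + 2)"
    using i by auto
  from q_recurrence_interpolation[OF rec this]
  have "qint Q (nat (b - a + 2)) * x (nat (i - a + 1))
      = Q ^ nat (i - a + 1) * qint Q (nat (b - a + 2) - nat (i - a + 1)) * x 0
        + qint Q (nat (i - a + 1)) * x (nat (b - a + 2))" .
  moreover have "nat (b - a + 2) - nat (i - a + 1) = nat (b - i + 1)"
    using i by auto
  moreover have "a - 1 + int (nat (b - a + 2)) = b + 1" "a - 1 + int (nat (i - a + 1)) = i"
    using ab i by auto
  ultimately show ?thesis
    unfolding x_def uprod_extend_left[OF ab] uprod_extend_right[OF ab]
    by (simp add: mult.assoc add.commute)
qed

lemma unital_ring_hom_qint: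
  assumes "unital_ring_hom phi"
  shows "phi (qint q m) = qint (phi q) m" and "phi (q ^ m) = phi q ^ m"
proof -
  have add: "phi (x + y) = phi x + phi y" and mult: "phi (x * y) = phi x * phi y"
    and one: "phi 1 = 1" for x y
    using assms unfolding unital_ring_hom_def by blast+
  have "phi 0 = 0"
    using add[of 0 0] by simp
  show pow: "phi (q ^ m) = phi q ^ m" for m
    by (induction m) (simp_all add: one mult)
  show "phi (qint q m) = qint (phi q) m"
    by (induction m) (simp_all add: \<open>phi 0 = 0\<close> qint_Suc add pow)
qed

theorem mainTheorem1:
  fixes q :: "'k::field_char_0"
    and phi :: "'k \<Rightarrow> 'r::comm_ring_1"
    and u :: "int \<Rightarrow> 'r"
    and a b i :: int
  assumes q_not_root: "\<forall>n::nat. n \<ge> 1 \<longrightarrow> q ^ n = 1 \<longrightarrow> q = 1"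
    and hom: "unital_ring_hom phi"
    and ab: "a \<le> b"
    and i: "i \<in> {a..b}"
    and rel: "\<forall>j\<in>{a..b}. klyachko_rel (phi q) u j"
  shows "phi (qint q (nat (b - a + 2))) * u i * uprod u {a..b}
       = phi (q ^ nat (i - a + 1) * qint q (nat (b - i + 1))) * uprod u {a - 1..b}
         + phi (qint q (nat (i - a + 1))) * uprod u {a..b + 1}"
proof -
  have "phi (s * t) = phi s * phi t" for s t
    using hom unfolding unital_ring_hom_def by blast
  then show ?thesis
    using klyachko_identity[OF ab i rel] by (simp add: unital_ring_hom_qint[OF hom])
qed

end
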